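(* Let $(L,\wedge,\vee,0,1)$ be a bounded lattice with additive Nakano mosaic $(L,\boxplus,0)$, where $x\boxplus y:=\{z\in L\mid x\vee y=x\vee z=z\vee y\}$. Then $(x\boxplus x)\boxplus(x\boxplus x)=x\boxplus x$ for all $x\in L$.
   Context: For subsets $X,Y\subseteq L$, $X\boxplus Y:=\bigcup_{u\in X,v\in Y}u\boxplus v$. *)

theory Defs
  imports Main
begin

definition nakano_add :: "'a::bounded_lattice \<Rightarrow> 'a \<Rightarrow> 'a set" where
  "nakano_add x y = {z. sup x y = sup x z \<and> sup x z = sup z y}"

definition nakano_add_set :: "'a::bounded_lattice set \<Rightarrow> 'a set \<Rightarrow> 'a set" where
  "nakano_add_set X Y = (\<Union>u\<in>X. \<Union>v\<in>Y. nakano_add u v)"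

end

theory Submission
  imports Defs
begin

(* x \<boxplus> x is the principal ideal of x. Every element of u \<boxplus> v lies below u \<squnion> v, so the
   ideal is closed under \<boxplus>; conversely z \<in> z \<boxplus> z gives the reverse inclusion. *)

lemma nakano_add_self: "nakano_add x x = {..x}"
  unfolding nakano_add_def by (auto simp: sup_commute le_iff_sup)

lemma mem_nakano_add_self: "x \<in> nakano_add x x"
  by (simp add: nakano_add_self)

lemma mem_nakano_add_le_sup:
  assumes "z \<in> nakano_add u v"
  shows "z \<le> sup u v"
proof -
  from assms have "sup u v = sup u z"
    by (simp add: nakano_add_def)
  then show ?thesis
    by (metis sup_ge2)
qed

lemma subset_nakano_add_set_self: "X \<subseteq> nakano_add_set X X"
  unfolding nakano_add_set_def using mem_nakano_add_self by blast

lemma nakano_add_set_subset_atMost: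
  assumes "X \<subseteq> {..x}" and "Y \<subseteq> {..x}"
  shows "nakano_add_set X Y \<subseteq> {..x}"
proof
  fix z assume "z \<in> nakano_add_set X Y"
  then obtain u v where "u \<in> X" "v \<in> Y" and z: "z \<in> nakano_add u v"
    unfolding nakano_add_set_def by blast
  from z have "z \<le> sup u v"
    by (rule mem_nakano_add_le_sup)
  also have "\<dots> \<le> x"
    using assms \<open>u \<in> X\<close> \<open>v \<in> Y\<close> by auto
  finally show "z \<in> {..x}"
    by simp
qed

theorem mainTheorem14:
  fixes x :: "'a::bounded_lattice"
  shows "nakano_add_set (nakano_add x x) (nakano_add x x) = nakano_add x x"
  unfolding nakano_add_self
  using nakano_add_set_subset_atMost[of "{..x}" x "{..x}"] subset_nakano_add_set_self[of "{..x}"]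
  by blast

end
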